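(* Let $\overline u,P^l\in\mathbb{R}^n$ be constant and let $(\overline\eta,\overline\omega,\overline V)$ with $\overline\eta\in\mathcal{R}(D^T)\cap(-\frac{\pi}{2},\frac{\pi}{2})^m$, $\overline V\in\mathbb{R}^n_{>0}$ be an equilibrium of the network dynamics with $u=\overline u$, i.e. $D^T\overline\omega=\mathbf{0}$, $\mathbf{0}=\overline u-D\Gamma(\overline V)\boldsymbol{\sin}(\overline\eta)-A\overline\omega-P^l$, $\mathbf{0}=-E(\overline\eta)\overline V+\overline E_{fd}$, and suppose $(\overline\eta,\overline V)$ satisfies condition $(\ast)$. Then the network dynamics with input $u$ and output $y=\omega$ is output strictly incrementally passive with respect to $(\overline\eta,\overline\omega,\overline V)$: the function $U=W_1(\omega,\overline\omega)+W_2(\eta,\overline\eta,V,\overline V)$, with $W_1=\frac12(\omega-\overline\omega)^TM(\omega-\overline\omega)$, satisfies along solutions \[ \dot U=-(y-\overline y)^TA(y-\overline y)-(\nabla_VW_2)^TT^{-1}\nabla_VW_2+(y-\overline y)^T(u-\overline u), \] where $\overline y=\overline\omega$.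
   Context: Standing setup (power network model). $\mathcal{G}=(\mathcal{V},\mathcal{E})$ is a connected undirected graph with node set $\{1,\dots,n\}$ and $m$ edges; each edge $k=\{i,j\}$ is given an arbitrary orientation, and $D\in\mathbb{R}^{n\times m}$ is the incidence matrix: $d_{ik}=+1$ if $i$ is the positive end of edge $k$, $-1$ if $i$ is the negative end, $0$ otherwise. $|D|$ denotes the matrix of entrywise absolute values of $D$. $\mathbf{1}_n$ is the all-ones vector. For each edge $k=\{i,j\}$ there is a susceptance $B_{ij}=B_{ji}>0$; each node has a self-susceptance $B_{ii}<0$ with $|B_{ii}|>\sum_{j\in\mathcal{N}_i}|B_{ij}|$ ($\mathcal{N}_i$ the neighbours of $i$ in $\mathcal{G}$), and reactances $X_{di}>X'_{di}>0$. For $V\in\mathbb{R}^n$, $\Gamma(V)=\mathrm{diag}(\gamma_1,\dots,\gamma_m)$ with $\gamma_k=V_iV_jB_{ij}$ for edge $k=\{i,j\}$. For $\eta\in\mathbb{R}^m$, $E(\eta)\in\mathbb{R}^{n\times n}$ is the symmetric matrix with $E_{ii}=\frac{1-B_{ii}(X_{di}-X'_{di})}{X_{di}-X'_{di}}$, $E_{ij}=-B_{ij}\cos(\eta_k)$ if $k=\{i,j\}$ is an edge, and $E_{ij}=0$ otherwise. $\boldsymbol{\sin}$, $\boldsymbol{\cos}$ act componentwise. $M,A,T$ are diagonal positive definite $n\times n$ matrices ($A=\mathrm{diag}(A_i)$), and $\overline E_{fd}\in\mathbb{R}^n$ is a constant vector. The network dynamics, with input $u\in\mathbb{R}^n$ (power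 generation) and demand $P^l$, are \[ \dot\eta=D^T\omega,\quad M\dot\omega=u-D\Gamma(V)\boldsymbol{\sin}(\eta)-A\omega-P^l,\quad T\dot V=-E(\eta)V+\overline E_{fd},\quad y=\omega, \] with state $(\eta,\omega,V)\in\mathbb{R}^m\times\mathbb{R}^n\times\mathbb{R}^n$. Condition $(\ast)$ on $(\overline\eta,\overline V)$: \[ E(\overline\eta)-\mathrm{diag}(\overline V)^{-1}|D|\Gamma(\overline V)\mathrm{diag}(\boldsymbol{\sin}(\overline\eta))\mathrm{diag}(\boldsymbol{\cos}(\overline\eta))^{-1}\mathrm{diag}(\boldsymbol{\sin}(\overline\eta))|D|^T\mathrm{diag}(\overline V)^{-1}>0. \] Storage function: $W_2(\eta,\overline\eta,V,\overline V)=-\mathbf{1}_m^T\Gamma(V)\boldsymbol{\cos}(\eta)+\mathbf{1}_m^T\Gamma(\overline V)\boldsymbol{\cos}(\overline\eta)-(\Gamma(\overline V)\boldsymbol{\sin}(\overline\eta))^T(\eta-\overline\eta)-\overline E_{fd}^T(V-\overline V)+\tfrac12V^TFV-\tfrac12\overline V^TF\overline V$, where $F$ is diagonal with $F_{ii}=\frac{1-B_{ii}(X_{di}-X'_{di})}{X_{di}-X'_{di}}$; note $\nabla_VW_2=E(\eta)V-\overline E_{fd}$. *)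

theory Defs
  imports "HOL-Analysis.Analysis"
begin

text \<open>Graph: nodes of finite type 'n, edges of finite type 'm. Edge k is oriented
  from its positive end pe k to its negative end ne k.\<close>

definition adj :: "('m \<Rightarrow> 'n) \<Rightarrow> ('m \<Rightarrow> 'n) \<Rightarrow> 'n \<Rightarrow> 'n \<Rightarrow> bool" where
  "adj pe ne i j \<longleftrightarrow> (\<exists>k. (pe k = i \<and> ne k = j) \<or> (pe k = j \<and> ne k = i))"

definition simple_connected_graph :: "('m::finite \<Rightarrow> 'n::finite) \<Rightarrow> ('m \<Rightarrow> 'n) \<Rightarrow> bool" where
  "simple_connected_graph pe ne \<longleftrightarrow>
     (\<forall>k. pe k \<noteq> ne k) \<and>
     (\<forall>k l. {pe k, ne k} = {pe l, ne l} \<longrightarrow> k = l) \<and>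
     (\<forall>i j. (adj pe ne)\<^sup>*\<^sup>* i j)"

definition incidence :: "('m::finite \<Rightarrow> 'n::finite) \<Rightarrow> ('m \<Rightarrow> 'n) \<Rightarrow> real^'m^'n" where
  "incidence pe ne = (\<chi> i k. if i = pe k then 1 else if i = ne k then -1 else 0)"

definition abs_mat :: "real^'m^'n \<Rightarrow> real^'m^'n" where
  "abs_mat X = (\<chi> i k. \<bar>X $ i $ k\<bar>)"

definition diag_mat :: "real^'n \<Rightarrow> real^'n^'n" where
  "diag_mat v = (\<chi> i j. if i = j then v $ i else 0)"

definition sinv :: "real^'m \<Rightarrow> real^'m" where "sinv x = (\<chi> k. sin (x $ k))"
definition cosv :: "real^'m \<Rightarrow> real^'m" where "cosv x = (\<chi> k. cos (x $ k))"
definition invv :: "real^'m \<Rightarrow> real^'m" where "invv x = (\<chi> k. inverse (x $ k))"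

definition Gam :: "('m::finite \<Rightarrow> 'n::finite) \<Rightarrow> ('m \<Rightarrow> 'n) \<Rightarrow> ('n \<Rightarrow> 'n \<Rightarrow> real)
    \<Rightarrow> real^'n \<Rightarrow> real^'m^'m" where
  "Gam pe ne B V = diag_mat (\<chi> k. V $ pe k * V $ ne k * B (pe k) (ne k))"

definition Fvec :: "('n::finite \<Rightarrow> 'n \<Rightarrow> real) \<Rightarrow> ('n \<Rightarrow> real) \<Rightarrow> ('n \<Rightarrow> real) \<Rightarrow> real^'n" where
  "Fvec B Xd Xdp = (\<chi> i. (1 - B i i * (Xd i - Xdp i)) / (Xd i - Xdp i))"

definition Fmat :: "('n::finite \<Rightarrow> 'n \<Rightarrow> real) \<Rightarrow> ('n \<Rightarrow> real) \<Rightarrow> ('n \<Rightarrow> real) \<Rightarrow> real^'n^'n" where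
  "Fmat B Xd Xdp = diag_mat (Fvec B Xd Xdp)"

text \<open>E(eta): diagonal F_ii; off-diagonal -B_ij cos(eta_k) if k = {i,j} is an edge
  (the edge is unique since the graph is simple), 0 otherwise.\<close>
definition Emat :: "('m::finite \<Rightarrow> 'n::finite) \<Rightarrow> ('m \<Rightarrow> 'n) \<Rightarrow> ('n \<Rightarrow> 'n \<Rightarrow> real)
    \<Rightarrow> ('n \<Rightarrow> real) \<Rightarrow> ('n \<Rightarrow> real) \<Rightarrow> real^'m \<Rightarrow> real^'n^'n" where
  "Emat pe ne B Xd Xdp eta = (\<chi> i j. if i = j then Fvec B Xd Xdp $ i
      else - (\<Sum>k\<in>{k. {pe k, ne k} = {i, j}}. B i j * cos (eta $ k)))"

definition pos_def :: "real^'n^'n \<Rightarrow> bool" where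
  "pos_def S \<longleftrightarrow> (\<forall>x. x \<noteq> 0 \<longrightarrow> x \<bullet> (S *v x) > 0)"

definition W2 :: "('m::finite \<Rightarrow> 'n::finite) \<Rightarrow> ('m \<Rightarrow> 'n) \<Rightarrow> ('n \<Rightarrow> 'n \<Rightarrow> real)
    \<Rightarrow> ('n \<Rightarrow> real) \<Rightarrow> ('n \<Rightarrow> real) \<Rightarrow> real^'n
    \<Rightarrow> real^'m \<Rightarrow> real^'m \<Rightarrow> real^'n \<Rightarrow> real^'n \<Rightarrow> real" where
  "W2 pe ne B Xd Xdp Efd eta etab V Vb =
     - (vec 1 \<bullet> (Gam pe ne B V *v cosv eta)) + vec 1 \<bullet> (Gam pe ne B Vb *v cosv etab)
     - (Gam pe ne B Vb *v sinv etab) \<bullet> (eta - etab)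
     - Efd \<bullet> (V - Vb)
     + (1/2) * (V \<bullet> (Fmat B Xd Xdp *v V)) - (1/2) * (Vb \<bullet> (Fmat B Xd Xdp *v Vb))"

definition W1 :: "real^'n::finite \<Rightarrow> real^'n \<Rightarrow> real^'n \<Rightarrow> real" where
  "W1 Mv omega omegab = (1/2) * ((omega - omegab) \<bullet> (diag_mat Mv *v (omega - omegab)))"

end

theory Submission
  imports Defs
begin

text \<open>Along solutions, \<open>W\<^sub>1\<close> changes at rate
  \<open>(\<omega> - \<omega>\<^sub>e)\<^sup>T (u - u\<^sub>e - A (\<omega> - \<omega>\<^sub>e) - D (\<Gamma>(V) sin \<eta> - \<Gamma>(V\<^sub>e) sin \<eta>\<^sub>e))\<close>
  (eliminating \<open>P\<^sup>l\<close> with the frequency equilibrium equation) and \<open>W\<^sub>2\<close> at rate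
  \<open>(\<Gamma>(V) sin \<eta> - \<Gamma>(V\<^sub>e) sin \<eta>\<^sub>e)\<^sup>T D\<^sup>T \<omega> + (\<nabla>\<^sub>V W\<^sub>2)\<^sup>T V'\<close>. The coupling terms cancel
  because \<open>D\<^sup>T \<omega>\<^sub>e = 0\<close>, and \<open>T V' = -\<nabla>\<^sub>V W\<^sub>2\<close> yields the dissipation term.

  For the strict minimum, \<open>U\<close> vanishes to first order at the equilibrium. Completing the square
  in the angle deviations (possible since \<open>cos \<eta>\<^sub>e > 0\<close>) turns its second-order part into a sum
  of squares plus the quadratic form of the matrix in \<open>(\<ast>)\<close>, so it is positive definite and
  hence bounded below by \<open>\<lambda> |z|\<^sup>2\<close>; this dominates the cubic Taylor remainder near the
  equilibrium.\<close>

section \<open>Matrix identities\<close>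

lemma diag_mat_mult_vec: "diag_mat v *v x = (\<chi> i. v $ i * x $ i)"
  unfolding diag_mat_def matrix_vector_mult_def
  by (simp add: vec_eq_iff if_distrib[of "\<lambda>c. c * _"] cong: if_cong)

lemma transpose_diag_mat [simp]: "transpose (diag_mat v) = diag_mat v"
  by (simp add: diag_mat_def transpose_def vec_eq_iff)

lemma inner_matrix_vector_mult: "(x::real^'n) \<bullet> (A *v y) = (transpose A *v x) \<bullet> y"
  by (metis dot_lmul_matrix transpose_transpose vector_transpose_matrix)

lemma Gam_mult_vec: "Gam pe ne B V *v x = (\<chi> k. V $ pe k * V $ ne k * B (pe k) (ne k) * x $ k)"
  by (simp add: Gam_def diag_mat_mult_vec)

lemma Fmat_mult_vec: "Fmat B Xd Xdp *v x = (\<chi> i. Fvec B Xd Xdp $ i * x $ i)"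
  by (simp add: Fmat_def diag_mat_mult_vec)

lemma transpose_abs_incidence_mult_vec:
  assumes "\<forall>k. pe k \<noteq> ne k"
  shows "transpose (abs_mat (incidence pe ne)) *v x = (\<chi> k. x $ pe k + x $ ne k)"
proof -
  have "(\<Sum>i\<in>UNIV. \<bar>if i = pe k then 1 else if i = ne k then -1 else 0\<bar> * x $ i)
      = (\<Sum>i\<in>UNIV. (if i = pe k then x $ i else 0) + (if i = ne k then x $ i else 0))" for k
    using assms by (intro sum.cong) auto
  then show ?thesis
    by (simp add: abs_mat_def incidence_def transpose_def matrix_vector_mult_def vec_eq_iff sum.distrib)
qed

lemma sum_sum_doubleton:
  fixes g :: "'n::finite \<Rightarrow> 'n \<Rightarrow> real"
  assumes "p \<noteq> q"
  shows "(\<Sum>i\<in>UNIV. \<Sum>j\<in>UNIV. if i \<noteq> j \<and> {p, q} = {i, j} then g i j else 0) = g p q + g q p"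
proof -
  have "(\<Sum>j\<in>UNIV. if i \<noteq> j \<and> {p, q} = {i, j} then g i j else 0)
     = (\<Sum>j\<in>UNIV. (if j = q then (if i = p then g p q else 0) else 0)
                   + (if j = p then (if i = q then g q p else 0) else 0))" for i
    using assms by (intro sum.cong) (auto simp: doubleton_eq_iff)
  then show ?thesis by (simp add: sum.distrib)
qed

lemma inner_Emat_mult_vec:
  assumes loopless: "\<forall>k. pe k \<noteq> ne k" and B_sym: "\<forall>i j. B i j = B j i"
  shows "x \<bullet> (Emat pe ne B Xd Xdp eta *v y) =
     (\<Sum>i\<in>UNIV. Fvec B Xd Xdp $ i * x $ i * y $ i)
     - (\<Sum>k\<in>UNIV. B (pe k) (ne k) * cos (eta $ k) * (x $ pe k * y $ ne k + x $ ne k * y $ pe k))"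
proof -
  let ?F = "Fvec B Xd Xdp"
  let ?h = "\<lambda>i j k. B i j * cos (eta $ k) * x $ i * y $ j"
  let ?edge = "\<lambda>i j k. if i \<noteq> j \<and> {pe k, ne k} = {i, j} then ?h i j k else 0"
  have entry: "x $ i * Emat pe ne B Xd Xdp eta $ i $ j * y $ j
      = (if i = j then ?F $ i * x $ i * y $ i else 0) - (\<Sum>k\<in>UNIV. ?edge i j k)" for i j
  proof (cases "i = j")
    case False
    have "(\<Sum>k\<in>UNIV. ?edge i j k) = (\<Sum>k\<in>{k. {pe k, ne k} = {i, j}}. ?h i j k)"
      using False by (simp add: sum.If_cases)
    then show ?thesis
      using False by (simp add: Emat_def sum_distrib_left sum_distrib_right mult_ac)
  qed (simp add: Emat_def)
  have "x \<bullet> (Emat pe ne B Xd Xdp eta *v y)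
      = (\<Sum>i\<in>UNIV. \<Sum>j\<in>UNIV. x $ i * Emat pe ne B Xd Xdp eta $ i $ j * y $ j)"
    by (simp add: inner_vec_def matrix_vector_mult_def sum_distrib_left mult.assoc)
  also have "\<dots> = (\<Sum>i\<in>UNIV. ?F $ i * x $ i * y $ i) - (\<Sum>i\<in>UNIV. \<Sum>j\<in>UNIV. \<Sum>k\<in>UNIV. ?edge i j k)"
    by (simp add: entry sum_subtractf)
  also have "(\<Sum>i\<in>UNIV. \<Sum>j\<in>UNIV. \<Sum>k\<in>UNIV. ?edge i j k) = (\<Sum>i\<in>UNIV. \<Sum>k\<in>UNIV. \<Sum>j\<in>UNIV. ?edge i j k)"
    by (intro sum.cong refl) (rule sum.swap)
  also have "\<dots> = (\<Sum>k\<in>UNIV. \<Sum>i\<in>UNIV. \<Sum>j\<in>UNIV. ?edge i j k)"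
    by (rule sum.swap)
  also have "\<dots> = (\<Sum>k\<in>UNIV. ?h (pe k) (ne k) k + ?h (ne k) (pe k) k)"
    using loopless by (simp add: sum_sum_doubleton)
  finally show ?thesis
    using B_sym by (simp add: algebra_simps)
qed

section \<open>The storage function along solutions\<close>

lemma W1_eq_sum: "W1 Mv om ob = (\<Sum>i\<in>UNIV. Mv $ i * (om $ i - ob $ i)\<^sup>2 / 2)"
  by (simp add: W1_def diag_mat_mult_vec inner_vec_def sum_divide_distrib sum_distrib_left
      power2_eq_square mult_ac)

lemma W2_eq_sum: "W2 pe ne B Xd Xdp Efd et eb VV Vb =
   (\<Sum>k\<in>UNIV. - B (pe k) (ne k) * VV $ pe k * VV $ ne k * cos (et $ k)
       + B (pe k) (ne k) * Vb $ pe k * Vb $ ne k * cos (eb $ k)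
       - B (pe k) (ne k) * Vb $ pe k * Vb $ ne k * sin (eb $ k) * (et $ k - eb $ k))
 + (\<Sum>i\<in>UNIV. - Efd $ i * (VV $ i - Vb $ i) + Fvec B Xd Xdp $ i * (VV $ i)\<^sup>2 / 2
       - Fvec B Xd Xdp $ i * (Vb $ i)\<^sup>2 / 2)"
  by (simp add: W2_def Gam_mult_vec Fmat_mult_vec inner_vec_def sinv_def cosv_def sum.distrib
      sum_subtractf sum_divide_distrib sum_distrib_left power2_eq_square algebra_simps)

lemma has_vector_derivative_vec_nth:
  fixes f :: "real \<Rightarrow> real^'n"
  assumes "(f has_vector_derivative d) (at t)"
  shows "((\<lambda>s. f s $ k) has_real_derivative d $ k) (at t)"
proof -
  have "((\<lambda>s. f s $ k) has_derivative (\<lambda>x. x * d $ k)) (at t)"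
    using bounded_linear.has_derivative[OF bounded_linear_vec_nth assms[unfolded has_vector_derivative_def]]
    by simp
  then show ?thesis by (simp add: has_field_derivative_def mult_commute_abs)
qed

lemma W1_has_real_derivative:
  assumes "(omega has_vector_derivative w') (at t)"
  shows "((\<lambda>s. W1 Mv (omega s) ob) has_real_derivative (omega t - ob) \<bullet> (diag_mat Mv *v w')) (at t)"
proof -
  note d = has_vector_derivative_vec_nth[OF assms]
  have "((\<lambda>s. \<Sum>i\<in>UNIV. Mv $ i * (omega s $ i - ob $ i)\<^sup>2 / 2) has_real_derivative
      (\<Sum>i\<in>UNIV. (omega t $ i - ob $ i) * (Mv $ i * w' $ i))) (at t)"
    by (auto intro!: derivative_eq_intros DERIV_sum d simp: power2_eq_square field_simps)
  then show ?thesis by (simp add: W1_eq_sum inner_vec_def diag_mat_mult_vec)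
qed

lemma W2_has_real_derivative:
  assumes loopless: "\<forall>k. pe k \<noteq> ne k" and B_sym: "\<forall>i j. B i j = B j i"
    and eta': "(eta has_vector_derivative e') (at t)" and V': "(V has_vector_derivative v') (at t)"
  shows "((\<lambda>s. W2 pe ne B Xd Xdp Efd (eta s) etab (V s) Vb) has_real_derivative
      (Gam pe ne B (V t) *v sinv (eta t) - Gam pe ne B Vb *v sinv etab) \<bullet> e'
      + (Emat pe ne B Xd Xdp (eta t) *v V t - Efd) \<bullet> v') (at t)"
proof -
  note de = has_vector_derivative_vec_nth[OF eta'] and dV = has_vector_derivative_vec_nth[OF V']
  define bb where "bb k = B (pe k) (ne k)" for k
  define F where "F = Fvec B Xd Xdp"
  have deriv: "((\<lambda>s. W2 pe ne B Xd Xdp Efd (eta s) etab (V s) Vb) has_real_derivative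
      (\<Sum>k\<in>UNIV. (bb k * V t $ pe k * V t $ ne k * sin (eta t $ k)
                   - bb k * Vb $ pe k * Vb $ ne k * sin (etab $ k)) * e' $ k)
      - (\<Sum>k\<in>UNIV. bb k * cos (eta t $ k) * (v' $ pe k * V t $ ne k + v' $ ne k * V t $ pe k))
      + (\<Sum>i\<in>UNIV. F $ i * v' $ i * V t $ i) - (\<Sum>i\<in>UNIV. Efd $ i * v' $ i)) (at t)"
    (is "(_ has_real_derivative ?d) _")
    unfolding W2_eq_sum bb_def F_def sum_subtractf[symmetric] add_diff_eq[symmetric] sum.distrib[symmetric]
    by (intro DERIV_add DERIV_sum) (auto intro!: derivative_eq_intros de dV simp: power2_eq_square algebra_simps)
  have "(\<Sum>k\<in>UNIV. (bb k * V t $ pe k * V t $ ne k * sin (eta t $ k)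
                   - bb k * Vb $ pe k * Vb $ ne k * sin (etab $ k)) * e' $ k)
      = (Gam pe ne B (V t) *v sinv (eta t) - Gam pe ne B Vb *v sinv etab) \<bullet> e'"
    by (simp add: bb_def Gam_mult_vec sinv_def inner_vec_def algebra_simps)
  moreover have "v' \<bullet> (Emat pe ne B Xd Xdp (eta t) *v V t) = (\<Sum>i\<in>UNIV. F $ i * v' $ i * V t $ i)
      - (\<Sum>k\<in>UNIV. bb k * cos (eta t $ k) * (v' $ pe k * V t $ ne k + v' $ ne k * V t $ pe k))"
    unfolding bb_def F_def by (rule inner_Emat_mult_vec[OF loopless B_sym])
  moreover have "v' \<bullet> Efd = (\<Sum>i\<in>UNIV. Efd $ i * v' $ i)"
    by (simp add: inner_vec_def mult.commute)
  ultimately have "?d = (Gam pe ne B (V t) *v sinv (eta t) - Gam pe ne B Vb *v sinv etab) \<bullet> e'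
      + (Emat pe ne B Xd Xdp (eta t) *v V t - Efd) \<bullet> v'"
    by (simp only: inner_commute[of _ v'] inner_diff_right)
  with deriv show ?thesis by simp
qed

lemma storage_has_real_derivative_along_solutions:
  fixes pe ne :: "'m::finite \<Rightarrow> 'n::finite"
  defines "D \<equiv> incidence pe ne"
  assumes loopless: "\<forall>k. pe k \<noteq> ne k" and B_sym: "\<forall>i j. B i j = B j i"
    and Mv_pos: "\<forall>i. Mv $ i > 0"
    and eq1: "transpose D *v omegab = 0"
    and eq2: "0 = ub - D *v (Gam pe ne B Vb *v sinv etab) - diag_mat Av *v omegab - Pl"
    and sol_eta: "(eta has_vector_derivative (transpose D *v omega t)) (at t)"
    and sol_omega: "(omega has_vector_derivative
          (diag_mat (invv Mv) *v (u t - D *v (Gam pe ne B (V t) *v sinv (eta t))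
                                   - diag_mat Av *v omega t - Pl))) (at t)"
    and sol_V: "(V has_vector_derivative
          (diag_mat (invv Tv) *v (- (Emat pe ne B Xd Xdp (eta t) *v V t) + Efd))) (at t)"
  shows "((\<lambda>s. W1 Mv (omega s) omegab + W2 pe ne B Xd Xdp Efd (eta s) etab (V s) Vb) has_real_derivative
         (- ((omega t - omegab) \<bullet> (diag_mat Av *v (omega t - omegab)))
          - ((Emat pe ne B Xd Xdp (eta t) *v V t - Efd)
               \<bullet> (diag_mat (invv Tv) *v (Emat pe ne B Xd Xdp (eta t) *v V t - Efd)))
          + (omega t - omegab) \<bullet> (u t - ub))) (at t)"
proof -
  define z where "z = Gam pe ne B (V t) *v sinv (eta t) - Gam pe ne B Vb *v sinv etab"
  define g where "g = Emat pe ne B Xd Xdp (eta t) *v V t - Efd"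
  define r where "r = u t - D *v (Gam pe ne B (V t) *v sinv (eta t)) - diag_mat Av *v omega t - Pl"
  have "diag_mat Mv *v (diag_mat (invv Mv) *v r) = r"
    using Mv_pos by (simp add: diag_mat_mult_vec invv_def vec_eq_iff less_imp_neq[symmetric])
  then have dW1: "((\<lambda>s. W1 Mv (omega s) omegab) has_real_derivative (omega t - omegab) \<bullet> r) (at t)"
    using W1_has_real_derivative[OF sol_omega[folded r_def], of Mv omegab] by simp
  have "diag_mat (invv Tv) *v (- (Emat pe ne B Xd Xdp (eta t) *v V t) + Efd) = - (diag_mat (invv Tv) *v g)"
    by (simp add: g_def vec_eq_iff diag_mat_mult_vec algebra_simps)
  then have dW2: "((\<lambda>s. W2 pe ne B Xd Xdp Efd (eta s) etab (V s) Vb) has_real_derivative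
      z \<bullet> (transpose D *v omega t) - g \<bullet> (diag_mat (invv Tv) *v g)) (at t)"
    using W2_has_real_derivative[OF loopless B_sym sol_eta sol_V] by (simp add: z_def g_def)
  have "r = (u t - ub) - D *v z - diag_mat Av *v (omega t - omegab)"
    using eq2 by (simp add: r_def z_def matrix_vector_right_distrib[symmetric] algebra_simps)
  moreover have "(omega t - omegab) \<bullet> (D *v z) = z \<bullet> (transpose D *v omega t)"
    unfolding inner_matrix_vector_mult[of "omega t - omegab"] matrix_vector_mult_diff_distrib eq1
    by (simp only: diff_zero inner_commute)
  ultimately have rate: "(omega t - omegab) \<bullet> r
        + (z \<bullet> (transpose D *v omega t) - g \<bullet> (diag_mat (invv Tv) *v g))
      = - ((omega t - omegab) \<bullet> (diag_mat Av *v (omega t - omegab)))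
        - g \<bullet> (diag_mat (invv Tv) *v g) + (omega t - omegab) \<bullet> (u t - ub)"
    by (simp add: inner_diff_right)
  show ?thesis
    using DERIV_cong[OF DERIV_add[OF dW1 dW2] rate] by (simp only: g_def)
qed

section \<open>Taylor estimates\<close>

lemma abs_sin_minus_le: "\<bar>sin x - x\<bar> \<le> \<bar>x :: real\<bar> ^ 3 / 6"
proof -
  have "\<bar>sin x - (\<Sum>m<3. sin_coeff m * x ^ m)\<bar> \<le> inverse (fact 3) * \<bar>x\<bar> ^ 3"
    by (rule Maclaurin_sin_bound)
  moreover have "(\<Sum>m<3. sin_coeff m * x ^ m) = x"
    by (simp add: numeral_3_eq_3 sin_coeff_def)
  moreover have "(fact 3 :: real) = 6" by (simp add: numeral_3_eq_3)
  ultimately show ?thesis by simp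
qed

lemma abs_cos_minus_one_le: "\<bar>cos a - 1\<bar> \<le> (a :: real)\<^sup>2 / 2"
proof -
  have "cos a - 1 = - 2 * sin (a / 2) ^ 2"
    using cos_double_sin[of "a / 2"] by simp
  moreover have "sin (a / 2) ^ 2 \<le> (a / 2) ^ 2"
    using abs_sin_x_le_abs_x[of "a / 2"] by (metis abs_ge_zero power2_abs power_mono)
  ultimately show ?thesis by (simp add: power2_eq_square)
qed

lemma abs_one_minus_cos_minus_half_sq_le:
  assumes "\<bar>a :: real\<bar> \<le> 1"
  shows "\<bar>1 - cos a - a\<^sup>2 / 2\<bar> \<le> \<bar>a\<bar> ^ 3"
proof -
  define t where "t = a / 2"
  have "1 - cos a - a\<^sup>2 / 2 = 2 * (sin t - t) * (sin t + t)"
    using cos_double_sin[of t] by (simp add: t_def power2_eq_square algebra_simps)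
  then have "\<bar>1 - cos a - a\<^sup>2 / 2\<bar> = 2 * \<bar>sin t - t\<bar> * \<bar>sin t + t\<bar>"
    by (simp only: abs_mult abs_numeral)
  also have "\<dots> \<le> 2 * (\<bar>t\<bar> ^ 3 / 6) * (2 * \<bar>t\<bar>)"
    using abs_sin_minus_le[of t] abs_sin_x_le_abs_x[of t] by (intro mult_mono) auto
  also have "\<dots> = \<bar>a\<bar> ^ 3 * (\<bar>a\<bar> / 24)"
    by (simp add: t_def power3_eq_cube abs_mult)
  also have "\<dots> \<le> \<bar>a\<bar> ^ 3"
    by (rule mult_left_le) (use assms in auto)
  finally show ?thesis .
qed

text \<open>The energy \<open>-\<beta> V\<^sub>i V\<^sub>j cos \<eta>\<^sub>k\<close> of an edge, expanded to second order around
  \<open>(V\<^sub>i, V\<^sub>j, \<eta>\<^sub>k) = (v, w, e)\<close> in the increments \<open>(b, c, a)\<close>.\<close>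

definition edge_remainder :: "real \<Rightarrow> real \<Rightarrow> real \<Rightarrow> real \<Rightarrow> real \<Rightarrow> real \<Rightarrow> real \<Rightarrow> real" where
  "edge_remainder \<beta> v w b c e a =
     \<beta> * v * w * cos e * (1 - cos a - a\<^sup>2 / 2) + \<beta> * v * w * sin e * (sin a - a)
     - \<beta> * (v * c + w * b) * (cos (e + a) - cos e + sin e * a) - \<beta> * b * c * (cos (e + a) - cos e)"

lemma edge_energy_expansion:
  "- \<beta> * (v + b) * (w + c) * cos (e + a) + \<beta> * v * w * cos e - \<beta> * v * w * sin e * a
   = \<beta> * v * w * cos e / 2 * a\<^sup>2 + \<beta> * (v * c + w * b) * sin e * a
     - \<beta> * b * c * cos e - \<beta> * (v * c + w * b) * cos e + edge_remainder \<beta> v w b c e a"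
  by (simp add: edge_remainder_def cos_add algebra_simps power2_eq_square)

lemma abs_mult_le_mult:
  fixes x y :: real
  assumes "\<bar>x\<bar> \<le> X" "\<bar>y\<bar> \<le> Y"
  shows "\<bar>x * y\<bar> \<le> X * Y"
  unfolding abs_mult using assms by (intro mult_mono') auto

lemma abs_cos_add_minus_cos_le: "\<bar>cos (e + a) - cos e\<bar> \<le> a\<^sup>2 / 2 + \<bar>a :: real\<bar>"
proof -
  have "cos (e + a) - cos e = cos e * (cos a - 1) - sin e * sin a"
    unfolding cos_add by (simp add: algebra_simps)
  then have "\<bar>cos (e + a) - cos e\<bar> \<le> \<bar>cos e * (cos a - 1)\<bar> + \<bar>sin e * sin a\<bar>"
    by (metis abs_triangle_ineq4)
  also have "\<dots> \<le> 1 * (a\<^sup>2 / 2) + 1 * \<bar>a\<bar>"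
    using abs_cos_minus_one_le[of a] abs_sin_x_le_abs_x[of a]
    by (intro add_mono abs_mult_le_mult) auto
  finally show ?thesis by simp
qed

lemma abs_cos_add_minus_cos_plus_sin_le:
  "\<bar>cos (e + a) - cos e + sin e * a\<bar> \<le> a\<^sup>2 / 2 + \<bar>a :: real\<bar> ^ 3 / 6"
proof -
  have "cos (e + a) - cos e + sin e * a = cos e * (cos a - 1) - sin e * (sin a - a)"
    unfolding cos_add by (simp add: algebra_simps)
  then have "\<bar>cos (e + a) - cos e + sin e * a\<bar> \<le> \<bar>cos e * (cos a - 1)\<bar> + \<bar>sin e * (sin a - a)\<bar>"
    by (metis abs_triangle_ineq4)
  also have "\<dots> \<le> 1 * (a\<^sup>2 / 2) + 1 * (\<bar>a\<bar> ^ 3 / 6)"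
    using abs_cos_minus_one_le[of a] abs_sin_minus_le[of a]
    by (intro add_mono abs_mult_le_mult) auto
  finally show ?thesis by simp
qed

lemma abs_edge_remainder_le:
  assumes a: "\<bar>a\<bar> \<le> n" and b: "\<bar>b\<bar> \<le> n" and c: "\<bar>c\<bar> \<le> n" and n: "n \<le> 1"
    and nonneg: "\<beta> \<ge> 0" "v \<ge> 0" "w \<ge> 0"
  shows "\<bar>edge_remainder \<beta> v w b c e a\<bar> \<le> (2 * (\<beta> * v * w) + \<beta> * (v + w) + 2 * \<beta>) * n ^ 3"
proof -
  have n0: "0 \<le> n" using a by linarith
  have a3: "\<bar>a\<bar> ^ 3 \<le> n ^ 3" using a by (simp add: power_mono)
  have a2: "a\<^sup>2 \<le> n\<^sup>2" using a by (metis abs_ge_zero power2_abs power_mono)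
  have n3: "n ^ 3 \<le> n\<^sup>2" using n0 n by (simp add: power_decreasing)
  have n2: "n\<^sup>2 \<le> n" using n0 n by (simp add: power2_eq_square mult_left_le)
  have "\<bar>1 - cos a - a\<^sup>2 / 2\<bar> \<le> n ^ 3"
    using abs_one_minus_cos_minus_half_sq_le[of a] a n a3 by linarith
  then have T1: "\<bar>\<beta> * v * w * cos e * (1 - cos a - a\<^sup>2 / 2)\<bar> \<le> \<beta> * v * w * 1 * n ^ 3"
    using nonneg by (intro abs_mult_le_mult) (auto simp del: mult_1_right)
  have "\<bar>sin a - a\<bar> \<le> n ^ 3"
    using abs_sin_minus_le[of a] a3 zero_le_power[of "\<bar>a\<bar>" 3] by linarith
  then have T2: "\<bar>\<beta> * v * w * sin e * (sin a - a)\<bar> \<le> \<beta> * v * w * 1 * n ^ 3"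
    using nonneg by (intro abs_mult_le_mult) (auto simp del: mult_1_right)
  have "\<bar>v * c + w * b\<bar> \<le> v * n + w * n"
    using abs_triangle_ineq[of "v * c" "w * b"] abs_mult_le_mult[of v v c n] abs_mult_le_mult[of w w b n]
      nonneg b c by simp
  then have T3: "\<bar>\<beta> * (v * c + w * b) * (cos (e + a) - cos e + sin e * a)\<bar> \<le> \<beta> * (v * n + w * n) * n\<^sup>2"
    using abs_cos_add_minus_cos_plus_sin_le[of e a] a2 a3 n3 nonneg zero_le_power2[of n]
    by (intro abs_mult_le_mult) auto
  have T4: "\<bar>\<beta> * b * c * (cos (e + a) - cos e)\<bar> \<le> \<beta> * n * n * (2 * n)"
    using abs_cos_add_minus_cos_le[of e a] a a2 n2 b c nonneg
    by (intro abs_mult_le_mult) auto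
  have "(2 * (\<beta> * v * w) + \<beta> * (v + w) + 2 * \<beta>) * n ^ 3
      = \<beta> * v * w * 1 * n ^ 3 + \<beta> * v * w * 1 * n ^ 3 + \<beta> * (v * n + w * n) * n\<^sup>2 + \<beta> * n * n * (2 * n)"
    by (simp add: power2_eq_square power3_eq_cube algebra_simps)
  with T1 T2 T3 T4 show ?thesis
    unfolding edge_remainder_def abs_le_iff by linarith
qed

section \<open>Strict minimum of the storage function\<close>

lemma homogeneous_quadratic_coercive:
  fixes Q :: "'a::euclidean_space \<Rightarrow> real"
  assumes cont: "continuous_on UNIV Q" and hom: "\<And>t z. Q (t *\<^sub>R z) = t\<^sup>2 * Q z"
    and pos: "\<And>z. z \<noteq> 0 \<Longrightarrow> Q z > 0"
  shows "\<exists>lam>0. \<forall>z. lam * (norm z)\<^sup>2 \<le> Q z"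
proof -
  obtain z0 where z0: "z0 \<in> sphere 0 1" and min: "\<forall>y\<in>sphere 0 1. Q z0 \<le> Q y"
    using continuous_attains_inf[OF compact_sphere[of 0 1] _ continuous_on_subset[OF cont subset_UNIV]]
    by auto
  have "Q z0 * (norm z)\<^sup>2 \<le> Q z" for z
  proof (cases "z = 0")
    case False
    then have "Q z0 \<le> Q (inverse (norm z) *\<^sub>R z)"
      using min by (simp add: norm_scaleR)
    also have "\<dots> = Q z / (norm z)\<^sup>2"
      by (simp add: hom power_inverse divide_inverse mult.commute)
    finally show ?thesis
      using False by (simp add: field_simps)
  qed (use hom[of 0 0] in simp)
  moreover have "Q z0 > 0"
    using z0 by (intro pos) auto
  ultimately show ?thesis by blast
qed

lemma quadratic_dominates_cubic_near_zero:
  fixes f :: "'a::real_normed_vector \<Rightarrow> real"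
  assumes lam: "lam > 0" and bound: "\<And>z. norm z \<le> 1 \<Longrightarrow> lam * (norm z)\<^sup>2 - K * norm z ^ 3 \<le> f z"
  shows "\<exists>r>0. \<forall>z. z \<noteq> 0 \<and> norm z < r \<longrightarrow> f z > 0"
proof (intro exI[of _ "min 1 (lam / (\<bar>K\<bar> + 1))"] conjI allI impI)
  show "min 1 (lam / (\<bar>K\<bar> + 1)) > 0" using lam by simp
  fix z :: 'a
  assume z: "z \<noteq> 0 \<and> norm z < min 1 (lam / (\<bar>K\<bar> + 1))"
  define n where "n = norm z"
  have n: "0 < n" "n < 1" "(\<bar>K\<bar> + 1) * n < lam"
    using z by (simp_all add: n_def field_simps)
  then have "K * n < lam"
    by (smt (verit) abs_ge_self mult_right_mono)
  then have "0 < n\<^sup>2 * (lam - K * n)"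
    using n by simp
  also have "\<dots> = lam * n\<^sup>2 - K * n ^ 3"
    by (simp add: power2_eq_square power3_eq_cube algebra_simps)
  also have "\<dots> \<le> f z"
    using bound[of z] n by (simp add: n_def)
  finally show "f z > 0" .
qed

context
  fixes pe ne :: "'m::finite \<Rightarrow> 'n::finite" and B :: "'n \<Rightarrow> 'n \<Rightarrow> real"
    and Xd Xdp :: "'n \<Rightarrow> real" and Mv Vb :: "real^'n" and etab :: "real^'m"
begin

text \<open>The matrix subtracted from \<open>E(\<eta>\<^sub>e)\<close> in condition \<open>(\<ast>)\<close>.\<close>

definition sin_coupling :: "real^'n^'n" where
  "sin_coupling = diag_mat (invv Vb) ** abs_mat (incidence pe ne) ** Gam pe ne B Vb ** diag_mat (sinv etab)
     ** diag_mat (invv (cosv etab)) ** diag_mat (sinv etab) ** transpose (abs_mat (incidence pe ne))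
     ** diag_mat (invv Vb)"

definition edge_stiffness :: "'m \<Rightarrow> real" where
  "edge_stiffness k = B (pe k) (ne k) * Vb $ pe k * Vb $ ne k * cos (etab $ k)"

definition angle_voltage_coupling :: "real^'n \<Rightarrow> 'm \<Rightarrow> real" where
  "angle_voltage_coupling b k = B (pe k) (ne k) * (Vb $ pe k * b $ ne k + Vb $ ne k * b $ pe k) * sin (etab $ k)"

text \<open>Half the Hessian of \<open>W\<^sub>1 + W\<^sub>2\<close> at the equilibrium, in the deviations
  \<open>(\<eta> - \<eta>\<^sub>e, V - V\<^sub>e, \<omega> - \<omega>\<^sub>e) = (a, b, w)\<close>.\<close>

definition hessian_form :: "(real^'m) \<times> (real^'n) \<times> (real^'n) \<Rightarrow> real" where
  "hessian_form = (\<lambda>(a, b, w). (\<Sum>i\<in>UNIV. Mv $ i * (w $ i)\<^sup>2 / 2)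
     + (\<Sum>k\<in>UNIV. edge_stiffness k / 2 * (a $ k)\<^sup>2 + angle_voltage_coupling b k * a $ k)
     + b \<bullet> (Emat pe ne B Xd Xdp etab *v b) / 2)"

context
  assumes loopless: "\<forall>k. pe k \<noteq> ne k" and B_sym: "\<forall>i j. B i j = B j i"
    and B_edge_pos: "\<forall>k. B (pe k) (ne k) > 0" and Mv_pos: "\<forall>i. Mv $ i > 0"
    and etab_bound: "\<forall>k. - (pi / 2) < etab $ k \<and> etab $ k < pi / 2" and Vb_pos: "\<forall>i. Vb $ i > 0"
begin

lemma edge_stiffness_pos: "edge_stiffness k > 0"
  using B_edge_pos Vb_pos etab_bound by (simp add: edge_stiffness_def cos_gt_zero_pi)

lemma inner_sin_coupling_mult_vec:
  "b \<bullet> (sin_coupling *v b) = (\<Sum>k\<in>UNIV. (angle_voltage_coupling b k)\<^sup>2 / edge_stiffness k)"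
proof -
  let ?A = "abs_mat (incidence pe ne)"
  define y where "y = transpose ?A *v (diag_mat (invv Vb) *v b)"
  have y: "y $ k = b $ pe k / Vb $ pe k + b $ ne k / Vb $ ne k" for k
    unfolding y_def transpose_abs_incidence_mult_vec[OF loopless] diag_mat_mult_vec
    by (simp add: invv_def field_simps)
  have "b \<bullet> (sin_coupling *v b)
     = b \<bullet> (diag_mat (invv Vb) *v (?A *v (Gam pe ne B Vb *v (diag_mat (sinv etab) *v
          (diag_mat (invv (cosv etab)) *v (diag_mat (sinv etab) *v y))))))"
    unfolding y_def sin_coupling_def by (simp add: matrix_vector_mul_assoc matrix_mul_assoc)
  also have "\<dots> = y \<bullet> (Gam pe ne B Vb *v (diag_mat (sinv etab) *v
          (diag_mat (invv (cosv etab)) *v (diag_mat (sinv etab) *v y))))"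
    unfolding y_def by (simp only: inner_matrix_vector_mult transpose_diag_mat)
  also have "\<dots> = (\<Sum>k\<in>UNIV. (angle_voltage_coupling b k)\<^sup>2 / edge_stiffness k)"
    unfolding inner_vec_def inner_real_def
  proof (intro sum.cong refl)
    fix k
    have "Vb $ pe k > 0" "Vb $ ne k > 0" "B (pe k) (ne k) > 0" "cos (etab $ k) > 0"
      using Vb_pos B_edge_pos etab_bound by (auto intro: cos_gt_zero_pi)
    then show "y $ k * (Gam pe ne B Vb *v (diag_mat (sinv etab) *v (diag_mat (invv (cosv etab)) *v
          (diag_mat (sinv etab) *v y)))) $ k = (angle_voltage_coupling b k)\<^sup>2 / edge_stiffness k"
      by (simp add: y Gam_mult_vec diag_mat_mult_vec sinv_def cosv_def invv_def edge_stiffness_def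
          angle_voltage_coupling_def power2_eq_square field_simps)
  qed
  finally show ?thesis .
qed

text \<open>The first-order terms cancel by the voltage equilibrium equation
  \<open>E(\<eta>\<^sub>e) V\<^sub>e = E\<^sub>f\<^sub>d\<close>.\<close>

lemma storage_eq_hessian_form_plus_remainder:
  assumes eq3: "Emat pe ne B Xd Xdp etab *v Vb = Efd"
  shows "W1 Mv (omegab + w) omegab + W2 pe ne B Xd Xdp Efd (etab + a) etab (Vb + b) Vb
    = hessian_form (a, b, w) + (\<Sum>k\<in>UNIV. edge_remainder (B (pe k) (ne k)) (Vb $ pe k) (Vb $ ne k)
        (b $ pe k) (b $ ne k) (etab $ k) (a $ k))"
proof -
  define F where "F = Fvec B Xd Xdp"
  define bb where "bb k = B (pe k) (ne k)" for k
  define L where "L k = bb k * (Vb $ pe k * b $ ne k + Vb $ ne k * b $ pe k)" for k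
  define R where "R k = edge_remainder (bb k) (Vb $ pe k) (Vb $ ne k) (b $ pe k) (b $ ne k) (etab $ k) (a $ k)" for k
  have edge: "- bb k * (Vb + b) $ pe k * (Vb + b) $ ne k * cos ((etab + a) $ k)
       + bb k * Vb $ pe k * Vb $ ne k * cos (etab $ k)
       - bb k * Vb $ pe k * Vb $ ne k * sin (etab $ k) * ((etab + a) $ k - etab $ k)
     = (edge_stiffness k / 2 * (a $ k)\<^sup>2 + angle_voltage_coupling b k * a $ k)
       - bb k * b $ pe k * b $ ne k * cos (etab $ k) - L k * cos (etab $ k) + R k" for k
    using edge_energy_expansion[of "bb k" "Vb $ pe k" "b $ pe k" "Vb $ ne k" "b $ ne k" "etab $ k" "a $ k"]
    by (simp add: edge_stiffness_def angle_voltage_coupling_def bb_def L_def R_def mult_ac)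
  have node: "- Efd $ i * ((Vb + b) $ i - Vb $ i) + F $ i * ((Vb + b) $ i)\<^sup>2 / 2 - F $ i * (Vb $ i)\<^sup>2 / 2
     = (F $ i * Vb $ i * b $ i - Efd $ i * b $ i) + F $ i * (b $ i)\<^sup>2 / 2" for i
    by (simp add: power2_eq_square algebra_simps)
  have first_order: "(\<Sum>i\<in>UNIV. F $ i * Vb $ i * b $ i) - (\<Sum>k\<in>UNIV. L k * cos (etab $ k))
      = (\<Sum>i\<in>UNIV. Efd $ i * b $ i)"
  proof -
    have "b \<bullet> (Emat pe ne B Xd Xdp etab *v Vb) = (\<Sum>i\<in>UNIV. F $ i * b $ i * Vb $ i)
        - (\<Sum>k\<in>UNIV. bb k * cos (etab $ k) * (b $ pe k * Vb $ ne k + b $ ne k * Vb $ pe k))"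
      unfolding F_def bb_def by (rule inner_Emat_mult_vec[OF loopless B_sym])
    then show ?thesis
      using eq3 by (simp add: inner_vec_def L_def mult_ac add.commute)
  qed
  have second_order: "(\<Sum>i\<in>UNIV. F $ i * (b $ i)\<^sup>2) / 2 - (\<Sum>k\<in>UNIV. bb k * b $ pe k * b $ ne k * cos (etab $ k))
      = b \<bullet> (Emat pe ne B Xd Xdp etab *v b) / 2"
  proof -
    have "b \<bullet> (Emat pe ne B Xd Xdp etab *v b) = (\<Sum>i\<in>UNIV. F $ i * b $ i * b $ i)
        - (\<Sum>k\<in>UNIV. bb k * cos (etab $ k) * (b $ pe k * b $ ne k + b $ ne k * b $ pe k))"
      unfolding F_def bb_def by (rule inner_Emat_mult_vec[OF loopless B_sym])
    then show ?thesis
      by (simp add: power2_eq_square sum_distrib_left algebra_simps)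
  qed
  have "W1 Mv (omegab + w) omegab + W2 pe ne B Xd Xdp Efd (etab + a) etab (Vb + b) Vb
     = (\<Sum>i\<in>UNIV. Mv $ i * (w $ i)\<^sup>2 / 2)
       + ((\<Sum>k\<in>UNIV. edge_stiffness k / 2 * (a $ k)\<^sup>2 + angle_voltage_coupling b k * a $ k)
          - (\<Sum>k\<in>UNIV. bb k * b $ pe k * b $ ne k * cos (etab $ k))
          - (\<Sum>k\<in>UNIV. L k * cos (etab $ k)) + (\<Sum>k\<in>UNIV. R k))
       + ((\<Sum>i\<in>UNIV. F $ i * Vb $ i * b $ i) - (\<Sum>i\<in>UNIV. Efd $ i * b $ i)
          + (\<Sum>i\<in>UNIV. F $ i * (b $ i)\<^sup>2) / 2)"
    unfolding W1_eq_sum W2_eq_sum bb_def[symmetric] edge node F_def[symmetric]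
    by (simp add: sum.distrib sum_subtractf sum_divide_distrib)
  then show ?thesis
    unfolding hessian_form_def R_def bb_def using first_order second_order[unfolded bb_def] by simp
qed

lemma hessian_form_eq_sum_squares:
  "hessian_form (a, b, w) = (\<Sum>i\<in>UNIV. Mv $ i * (w $ i)\<^sup>2 / 2)
     + (\<Sum>k\<in>UNIV. edge_stiffness k / 2 * (a $ k + angle_voltage_coupling b k / edge_stiffness k)\<^sup>2)
     + b \<bullet> ((Emat pe ne B Xd Xdp etab - sin_coupling) *v b) / 2"
proof -
  have "edge_stiffness k / 2 * (a $ k)\<^sup>2 + angle_voltage_coupling b k * a $ k
      = edge_stiffness k / 2 * (a $ k + angle_voltage_coupling b k / edge_stiffness k)\<^sup>2
        - (angle_voltage_coupling b k)\<^sup>2 / edge_stiffness k / 2" for k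
    using edge_stiffness_pos[of k] by (simp add: field_simps power2_eq_square)
  then show ?thesis
    by (simp add: hessian_form_def inner_sin_coupling_mult_vec matrix_vector_mult_diff_rdistrib
        inner_diff_right sum_subtractf sum_divide_distrib diff_divide_distrib)
qed

lemma hessian_form_pos:
  assumes cond: "pos_def (Emat pe ne B Xd Xdp etab - sin_coupling)" and "z \<noteq> 0"
  shows "hessian_form z > 0"
proof -
  obtain a b w where z: "z = (a, b, w)" by (cases z) auto
  define kinetic where "kinetic = (\<Sum>i\<in>UNIV. Mv $ i * (w $ i)\<^sup>2 / 2)"
  define angular where "angular =
    (\<Sum>k\<in>UNIV. edge_stiffness k / 2 * (a $ k + angle_voltage_coupling b k / edge_stiffness k)\<^sup>2)"
  define voltage where "voltage = b \<bullet> ((Emat pe ne B Xd Xdp etab - sin_coupling) *v b) / 2"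
  have kinetic_nonneg: "kinetic \<ge> 0"
    using Mv_pos by (auto simp: kinetic_def less_imp_le intro!: sum_nonneg)
  have angular_nonneg: "angular \<ge> 0"
    using edge_stiffness_pos by (auto simp: angular_def less_imp_le intro!: sum_nonneg)
  have voltage_pos: "b \<noteq> 0 \<Longrightarrow> voltage > 0"
    using cond by (simp add: voltage_def pos_def_def)
  then have voltage_nonneg: "voltage \<ge> 0"
    by (cases "b = 0") (auto simp: voltage_def)
  have "kinetic + angular + voltage > 0"
  proof (cases "b = 0")
    case b0: True
    show ?thesis
    proof (cases "a = 0")
      case False
      then obtain k where "a $ k \<noteq> 0" by (auto simp: vec_eq_iff)
      then have "angular > 0"
        unfolding angular_def using b0 edge_stiffness_pos
        by (intro sum_pos2[where i=k]) (auto simp: angle_voltage_coupling_def less_imp_le)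
      then show ?thesis using kinetic_nonneg voltage_nonneg by simp
    next
      case True
      with b0 z \<open>z \<noteq> 0\<close> have "w \<noteq> 0" by (simp add: zero_prod_def)
      then obtain i where "w $ i \<noteq> 0" by (auto simp: vec_eq_iff)
      then have "kinetic > 0"
        unfolding kinetic_def using Mv_pos by (intro sum_pos2[where i=i]) (auto simp: less_imp_le)
      then show ?thesis using angular_nonneg voltage_nonneg by simp
    qed
  qed (use voltage_pos kinetic_nonneg angular_nonneg in simp)
  then show ?thesis
    unfolding z hessian_form_eq_sum_squares kinetic_def angular_def voltage_def .
qed

lemma hessian_form_coercive:
  assumes cond: "pos_def (Emat pe ne B Xd Xdp etab - sin_coupling)"
  shows "\<exists>lam>0. \<forall>z. lam * (norm z)\<^sup>2 \<le> hessian_form z"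
proof (rule homogeneous_quadratic_coercive)
  show "continuous_on UNIV hessian_form"
    unfolding hessian_form_def case_prod_unfold angle_voltage_coupling_def
    by (intro continuous_intros bounded_linear.continuous_on[OF matrix_vector_mul_bounded_linear]) auto
  show "hessian_form (t *\<^sub>R z) = t\<^sup>2 * hessian_form z" for t z
    by (cases z) (simp add: hessian_form_def angle_voltage_coupling_def matrix_vector_mult_scaleR
        sum_distrib_left power2_eq_square algebra_simps)
qed (rule hessian_form_pos[OF cond])

lemma sum_edge_remainder_cubic_bound:
  "\<exists>K. \<forall>a b (w :: real^'n). norm (a, b, w) \<le> 1 \<longrightarrow> - K * norm (a, b, w) ^ 3 \<le>
     (\<Sum>k\<in>UNIV. edge_remainder (B (pe k) (ne k)) (Vb $ pe k) (Vb $ ne k) (b $ pe k) (b $ ne k) (etab $ k) (a $ k))"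
proof (intro exI allI impI)
  define C where "C k = 2 * (B (pe k) (ne k) * Vb $ pe k * Vb $ ne k)
    + B (pe k) (ne k) * (Vb $ pe k + Vb $ ne k) + 2 * B (pe k) (ne k)" for k
  fix a :: "real^'m" and b w :: "real^'n"
  assume n1: "norm (a, b, w) \<le> 1"
  define n where "n = norm (a, b, w)"
  have an: "\<bar>a $ k\<bar> \<le> n" for k
    using component_le_norm_cart[of a k] norm_fst_le[of a "(b, w)"] unfolding n_def by linarith
  have bn: "\<bar>b $ i\<bar> \<le> n" for i
    using component_le_norm_cart[of b i] norm_fst_le[of b w] norm_snd_le[where x=a and y="(b, w)"]
    unfolding n_def by linarith
  have "- (C k * n ^ 3) \<le>
      edge_remainder (B (pe k) (ne k)) (Vb $ pe k) (Vb $ ne k) (b $ pe k) (b $ ne k) (etab $ k) (a $ k)" for k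
    using abs_edge_remainder_le[where \<beta>="B (pe k) (ne k)" and v="Vb $ pe k" and w="Vb $ ne k" and e="etab $ k",
        OF an[of k] bn[of "pe k"] bn[of "ne k"]] n1
      B_edge_pos Vb_pos
    unfolding C_def n_def abs_le_iff by (auto simp: less_imp_le)
  then have "(\<Sum>k\<in>UNIV. - (C k * n ^ 3)) \<le> (\<Sum>k\<in>UNIV.
      edge_remainder (B (pe k) (ne k)) (Vb $ pe k) (Vb $ ne k) (b $ pe k) (b $ ne k) (etab $ k) (a $ k))"
    by (rule sum_mono)
  then show "- sum C UNIV * norm (a, b, w) ^ 3 \<le> (\<Sum>k\<in>UNIV.
      edge_remainder (B (pe k) (ne k)) (Vb $ pe k) (Vb $ ne k) (b $ pe k) (b $ ne k) (etab $ k) (a $ k))"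
    by (simp add: n_def sum_negf sum_distrib_right)
qed

lemma storage_pos_near_equilibrium:
  assumes eq3: "Emat pe ne B Xd Xdp etab *v Vb = Efd"
    and cond: "pos_def (Emat pe ne B Xd Xdp etab - sin_coupling)"
  shows "\<exists>r>0. \<forall>et om VV. dist et etab < r \<and> dist om omegab < r \<and> dist VV Vb < r
            \<and> (et, om, VV) \<noteq> (etab, omegab, Vb) \<longrightarrow>
            W1 Mv om omegab + W2 pe ne B Xd Xdp Efd et etab VV Vb > 0"
proof -
  define f where "f = (\<lambda>(a, b, w). W1 Mv (omegab + w) omegab
    + W2 pe ne B Xd Xdp Efd (etab + a) etab (Vb + b) Vb)"
  obtain lam where lam: "lam > 0" "\<And>z. lam * (norm z)\<^sup>2 \<le> hessian_form z"
    using hessian_form_coercive[OF cond] by blast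
  obtain K where K: "\<And>a b (w :: real^'n). norm (a, b, w) \<le> 1 \<Longrightarrow> - K * norm (a, b, w) ^ 3 \<le>
     (\<Sum>k\<in>UNIV. edge_remainder (B (pe k) (ne k)) (Vb $ pe k) (Vb $ ne k) (b $ pe k) (b $ ne k) (etab $ k) (a $ k))"
    using sum_edge_remainder_cubic_bound by blast
  have "lam * (norm z)\<^sup>2 - K * norm z ^ 3 \<le> f z" if "norm z \<le> 1" for z
    using lam(2)[of z] K[of "fst z" "fst (snd z)" "snd (snd z)"] that
    by (cases z) (simp add: f_def storage_eq_hessian_form_plus_remainder[OF eq3])
  then obtain r where r: "r > 0" and pos: "\<And>z. z \<noteq> 0 \<Longrightarrow> norm z < r \<Longrightarrow> f z > 0"
    using quadratic_dominates_cubic_near_zero[OF lam(1)] by blast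
  show ?thesis
  proof (intro exI[of _ "r / 3"] conjI allI impI)
    fix et om VV
    assume near: "dist et etab < r / 3 \<and> dist om omegab < r / 3 \<and> dist VV Vb < r / 3
      \<and> (et, om, VV) \<noteq> (etab, omegab, Vb)"
    define z where "z = (et - etab, VV - Vb, om - omegab)"
    have "norm z \<le> norm (et - etab) + norm (VV - Vb) + norm (om - omegab)"
      unfolding z_def using norm_Pair_le[of "et - etab" "(VV - Vb, om - omegab)"]
        norm_Pair_le[of "VV - Vb" "om - omegab"] by linarith
    then have "norm z < r"
      using near by (simp add: dist_norm)
    moreover have "z \<noteq> 0"
      using near by (auto simp: z_def zero_prod_def)
    ultimately show "W1 Mv om omegab + W2 pe ne B Xd Xdp Efd et etab VV Vb > 0"
      using pos[of z] by (simp add: f_def z_def)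
  qed (use r in simp)
qed

end

end

theorem theorem1:
  fixes pe ne :: "'m::finite \<Rightarrow> 'n::finite"
    and B :: "'n \<Rightarrow> 'n \<Rightarrow> real" and Xd Xdp :: "'n \<Rightarrow> real"
    and Mv Av Tv Efd ub Pl omegab Vb :: "real^'n" and etab :: "real^'m"
    and eta :: "real \<Rightarrow> real^'m" and omega V u :: "real \<Rightarrow> real^'n" and t :: real
  defines "D \<equiv> incidence pe ne"
    and "U \<equiv> (\<lambda>et om VV. W1 Mv om omegab + W2 pe ne B Xd Xdp Efd et etab VV Vb)"
  assumes graph: "simple_connected_graph pe ne"
    and B_sym: "\<forall>i j. B i j = B j i"
    and B_pos: "\<forall>i j. adj pe ne i j \<longrightarrow> B i j > 0"
    and B_self: "\<forall>i. B i i < 0 \<and> \<bar>B i i\<bar> > (\<Sum>j\<in>{j. adj pe ne i j}. \<bar>B i j\<bar>)"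
    and X_pos: "\<forall>i. Xd i > Xdp i \<and> Xdp i > 0"
    and MAT_pos: "\<forall>i. Mv $ i > 0 \<and> Av $ i > 0 \<and> Tv $ i > 0"
    and etab_range: "\<exists>th. etab = transpose D *v th"
    and etab_bound: "\<forall>k. - (pi/2) < etab $ k \<and> etab $ k < pi/2"
    and Vb_pos: "\<forall>i. Vb $ i > 0"
    and eq1: "transpose D *v omegab = 0"
    and eq2: "0 = ub - D *v (Gam pe ne B Vb *v sinv etab) - diag_mat Av *v omegab - Pl"
    and eq3: "0 = - (Emat pe ne B Xd Xdp etab *v Vb) + Efd"
    and cond: "pos_def (Emat pe ne B Xd Xdp etab
                 - diag_mat (invv Vb) ** abs_mat D ** Gam pe ne B Vb ** diag_mat (sinv etab)
                   ** diag_mat (invv (cosv etab)) ** diag_mat (sinv etab) ** transpose (abs_mat D)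
                   ** diag_mat (invv Vb))"
    and sol_eta: "(eta has_vector_derivative (transpose D *v omega t)) (at t)"
    and sol_omega: "(omega has_vector_derivative
          (diag_mat (invv Mv) *v (u t - D *v (Gam pe ne B (V t) *v sinv (eta t))
                                   - diag_mat Av *v omega t - Pl))) (at t)"
    and sol_V: "(V has_vector_derivative
          (diag_mat (invv Tv) *v (- (Emat pe ne B Xd Xdp (eta t) *v V t) + Efd))) (at t)"
  shows "U etab omegab Vb = 0
    \<and> (\<exists>r>0. \<forall>et om VV. dist et etab < r \<and> dist om omegab < r \<and> dist VV Vb < r
            \<and> (et, om, VV) \<noteq> (etab, omegab, Vb) \<longrightarrow> U et om VV > 0)
    \<and> ((\<lambda>s. U (eta s) (omega s) (V s)) has_real_derivative
         (- ((omega t - omegab) \<bullet> (diag_mat Av *v (omega t - omegab)))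
          - ((Emat pe ne B Xd Xdp (eta t) *v V t - Efd)
               \<bullet> (diag_mat (invv Tv) *v (Emat pe ne B Xd Xdp (eta t) *v V t - Efd)))
          + (omega t - omegab) \<bullet> (u t - ub))) (at t)"
proof -
  have loopless: "\<forall>k. pe k \<noteq> ne k"
    using graph by (simp add: simple_connected_graph_def)
  have B_edge_pos: "\<forall>k. B (pe k) (ne k) > 0"
    using B_pos by (auto simp: adj_def)
  have Mv_pos: "\<forall>i. Mv $ i > 0"
    using MAT_pos by blast
  have equilibrium_V: "Emat pe ne B Xd Xdp etab *v Vb = Efd"
    using eq3 by simp
  have cond': "pos_def (Emat pe ne B Xd Xdp etab - sin_coupling pe ne B Vb etab)"
    using cond by (simp add: D_def sin_coupling_def)
  note strict_min = storage_pos_near_equilibrium[where omegab=omegab,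
      OF loopless B_sym B_edge_pos Mv_pos etab_bound Vb_pos equilibrium_V cond']
  note rate = storage_has_real_derivative_along_solutions[where eta=eta and omega=omega and V=V
      and u=u and t=t, OF loopless B_sym Mv_pos eq1[unfolded D_def] eq2[unfolded D_def]
      sol_eta[unfolded D_def] sol_omega[unfolded D_def] sol_V]
  show ?thesis
    unfolding U_def using strict_min rate by (simp add: W1_def W2_def)
qed

end
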